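(* Let $a$ be a real function of bounded variation with support contained in $(-1/2,1/2)$, and let $b\in L^1$ be supported in $[0,1]$ with zero average. Then $$\|a*b\|_{L^1([-1,2])}\le\mathrm{Var}(a)\,\|b\|_W.$$ As a consequence $\|a\,\hat*\,b\|_{L^1([0,1])}\le\mathrm{Var}(a)\|b\|_W$, and therefore $\|N_\xi\|_{W\to L^1}\le\mathrm{Var}(\rho_\xi)=\xi^{-1}\mathrm{Var}(\rho)$.
   Context: $*$ is the usual convolution on $\mathbb R$. For zero-average $f\in L^1([0,1])$, $\|f\|_W:=\|F\|_{L^1}$ with $F(x)=\int_0^xf(t)\,dt$. With $\pi(x)=\min_{i\in\mathbb Z}|x-2i|$, $a\,\hat*\,f:=\pi_*(a*\hat f)$, where $\hat f$ is $f$ extended by $0$ outside $[0,1]$ and $\pi_*$ the pushforward by $\pi$. $\rho$ is of bounded variation supported in $[-1/2,1/2]$ with $\int\rho=1$, $\rho_\xi(x)=\xi^{-1}\rho(x/\xi)$, $N_\xi f=\rho_\xi\,\hat*\,f$. $\mathrm{Var}$ is total variation. *)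

theory Defs
  imports "HOL-Analysis.Analysis"
begin

definition variation_sums :: "(real \<Rightarrow> real) \<Rightarrow> real set" where
  "variation_sums f =
     {(\<Sum>i<n. \<bar>f (x (Suc i)) - f (x i)\<bar>) | x n. \<forall>i<n. x i \<le> x (Suc i)}"

definition bounded_variation :: "(real \<Rightarrow> real) \<Rightarrow> bool" where
  "bounded_variation f \<longleftrightarrow> bdd_above (variation_sums f)"

definition Var :: "(real \<Rightarrow> real) \<Rightarrow> real" where
  "Var f = Sup (variation_sums f)"

definition conv :: "(real \<Rightarrow> real) \<Rightarrow> (real \<Rightarrow> real) \<Rightarrow> real \<Rightarrow> real" where
  "conv a b x = (\<integral>y. a (x - y) * b y \<partial>lborel)"

definition hat_ext :: "(real \<Rightarrow> real) \<Rightarrow> real \<Rightarrow> real" where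
  "hat_ext f x = (if x \<in> {0..1} then f x else 0)"

definition normW :: "(real \<Rightarrow> real) \<Rightarrow> real" where
  "normW f = (\<integral>x\<in>{0..1}. \<bar>\<integral>t\<in>{0..x}. f t \<partial>lborel\<bar> \<partial>lborel)"

definition fold_pi :: "real \<Rightarrow> real" where
  "fold_pi x = (INF i\<in>(UNIV::int set). \<bar>x - 2 * of_int i\<bar>)"

text \<open>Density on [0,1] of the pushforward by pi of the measure h dx:
  g(y) = sum over the preimages 2i+y, 2i-y of y under pi.\<close>
definition pushforward_pi :: "(real \<Rightarrow> real) \<Rightarrow> real \<Rightarrow> real" where
  "pushforward_pi h y = (\<Sum>\<^sub>\<infinity>i\<in>(UNIV::int set). h (2 * of_int i + y) + h (2 * of_int i - y))"

definition hat_conv :: "(real \<Rightarrow> real) \<Rightarrow> (real \<Rightarrow> real) \<Rightarrow> real \<Rightarrow> real" where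
  "hat_conv a f = pushforward_pi (conv a (hat_ext f))"

definition rho_xi :: "(real \<Rightarrow> real) \<Rightarrow> real \<Rightarrow> real \<Rightarrow> real" where
  "rho_xi \<rho> \<xi> x = \<rho> (x / \<xi>) / \<xi>"

definition N_op :: "(real \<Rightarrow> real) \<Rightarrow> real \<Rightarrow> (real \<Rightarrow> real) \<Rightarrow> real \<Rightarrow> real" where
  "N_op \<rho> \<xi> f = hat_conv (rho_xi \<rho> \<xi>) f"

end

theory Submission
  imports Defs
begin

text \<open>Write \<open>a = P - N\<close> with \<open>P\<close>, \<open>N\<close> monotone and taking values in \<open>[0, Var a / 2]\<close>.
  For monotone \<open>P\<close> with \<open>0 \<le> P \<le> c\<close>, the layer-cake formula writes \<open>P * b\<close> as the integral
  over \<open>s \<in> [0, c]\<close> of the convolutions of \<open>b\<close> with the indicators of the superlevel sets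
  \<open>{P > s}\<close>. These are half-lines, so each such convolution is a translate of the primitive
  \<open>B u = \<integral>\<^bsub>(-\<infinity>, u]\<^esub> b\<close>, and \<open>\<parallel>B\<parallel>\<^sub>1 = \<parallel>b\<parallel>\<^sub>W\<close> because \<open>b\<close> has mean zero and support in
  \<open>[0, 1]\<close>. Hence \<open>\<parallel>P * b\<parallel>\<^sub>1 \<le> c \<parallel>b\<parallel>\<^sub>W\<close> and \<open>\<parallel>a * b\<parallel>\<^sub>1 \<le> Var a \<parallel>b\<parallel>\<^sub>W\<close>. Folding by \<open>\<pi>\<close> does not
  increase the \<open>L\<^sup>1\<close> norm, and rescaling partitions gives \<open>Var \<rho>\<^sub>\<xi> = Var \<rho> / \<xi>\<close>.\<close>

lemma variation_sumsI:
  "\<forall>i<n. p i \<le> p (Suc i) \<Longrightarrow> (\<Sum>i<n. \<bar>f (p (Suc i)) - f (p i)\<bar>) \<in> variation_sums f"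
  unfolding variation_sums_def by blast

lemma zero_in_variation_sums: "0 \<in> variation_sums f"
  using variation_sumsI[of 0] by simp

lemma variation_sumsE:
  assumes "s \<in> variation_sums f"
  obtains p n where "s = (\<Sum>i<n. \<bar>f (p (Suc i)) - f (p i)\<bar>)" "\<forall>i<n. p i \<le> p (Suc i)"
  using assms unfolding variation_sums_def by blast

lemma variation_sum_le_Var: "bounded_variation f \<Longrightarrow> s \<in> variation_sums f \<Longrightarrow> s \<le> Var f"
  unfolding bounded_variation_def Var_def by (rule cSup_upper)

lemma Var_le: "(\<And>s. s \<in> variation_sums f \<Longrightarrow> s \<le> c) \<Longrightarrow> Var f \<le> c"
  unfolding Var_def using zero_in_variation_sums by (intro cSup_least) auto

lemma Var_nonneg: "bounded_variation f \<Longrightarrow> 0 \<le> Var f"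
  using variation_sum_le_Var zero_in_variation_sums by blast

lemma variation_sums_rescale:
  assumes "\<xi> > 0"
  shows "variation_sums (\<lambda>x. f (x / \<xi>) / \<xi>) = (\<lambda>s. s / \<xi>) ` variation_sums f"
proof -
  have sum_eq: "(\<Sum>i<n. \<bar>f (p (Suc i) / \<xi>) / \<xi> - f (p i / \<xi>) / \<xi>\<bar>)
      = (\<Sum>i<n. \<bar>f (p (Suc i) / \<xi>) - f (p i / \<xi>)\<bar>) / \<xi>" for p n
    using assms by (simp add: sum_divide_distrib diff_divide_distrib[symmetric] abs_divide)
  show ?thesis
  proof (intro equalityI subsetI)
    fix s assume "s \<in> variation_sums (\<lambda>x. f (x / \<xi>) / \<xi>)"
    then obtain p n where s: "s = (\<Sum>i<n. \<bar>f (p (Suc i) / \<xi>) / \<xi> - f (p i / \<xi>) / \<xi>\<bar>)"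
      and p: "\<forall>i<n. p i \<le> p (Suc i)" by (rule variation_sumsE)
    have "\<forall>i<n. p i / \<xi> \<le> p (Suc i) / \<xi>" using p assms by (simp add: divide_right_mono)
    from variation_sumsI[OF this, of f] show "s \<in> (\<lambda>s. s / \<xi>) ` variation_sums f"
      unfolding s sum_eq by blast
  next
    fix s assume "s \<in> (\<lambda>s. s / \<xi>) ` variation_sums f"
    then obtain t where t: "t \<in> variation_sums f" and s: "s = t / \<xi>" by blast
    obtain q n where t_eq: "t = (\<Sum>i<n. \<bar>f (q (Suc i)) - f (q i)\<bar>)"
      and q: "\<forall>i<n. q i \<le> q (Suc i)" using t by (rule variation_sumsE)
    have "\<forall>i<n. \<xi> * q i \<le> \<xi> * q (Suc i)" using q assms by simp
    from variation_sumsI[OF this, of "\<lambda>x. f (x / \<xi>) / \<xi>"]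
    show "s \<in> variation_sums (\<lambda>x. f (x / \<xi>) / \<xi>)"
      using sum_eq[of "\<lambda>i. \<xi> * q i" n] assms by (simp add: s t_eq)
  qed
qed

lemma
  assumes "\<xi> > 0" and bv: "bounded_variation \<rho>"
  shows bounded_variation_rho_xi: "bounded_variation (rho_xi \<rho> \<xi>)"
    and Var_rho_xi: "Var (rho_xi \<rho> \<xi>) = Var \<rho> / \<xi>"
proof -
  have vs: "variation_sums (rho_xi \<rho> \<xi>) = (\<lambda>s. s / \<xi>) ` variation_sums \<rho>"
    using variation_sums_rescale[OF assms(1)] by (simp add: rho_xi_def[abs_def])
  have mono: "mono (\<lambda>s::real. s / \<xi>)" using assms(1) by (simp add: mono_def divide_right_mono)
  show "bounded_variation (rho_xi \<rho> \<xi>)"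
    using bv unfolding bounded_variation_def vs by (rule bdd_above_image_mono[OF mono])
  have "Var \<rho> / \<xi> = (SUP s\<in>variation_sums \<rho>. s / \<xi>)"
    unfolding Var_def using zero_in_variation_sums bv[unfolded bounded_variation_def] assms(1)
    by (intro continuous_at_Sup_mono mono) (auto intro!: continuous_intros)
  then show "Var (rho_xi \<rho> \<xi>) = Var \<rho> / \<xi>" by (simp add: Var_def vs)
qed

definition Var_upto :: "(real \<Rightarrow> real) \<Rightarrow> real \<Rightarrow> real" where
  "Var_upto a x = Var (\<lambda>t. a (min t x))"

lemma variation_sums_clamp_subset: "variation_sums (\<lambda>t. a (min t x)) \<subseteq> variation_sums a"
proof
  fix s assume "s \<in> variation_sums (\<lambda>t. a (min t x))"
  then obtain p n where s: "s = (\<Sum>i<n. \<bar>a (min (p (Suc i)) x) - a (min (p i) x)\<bar>)"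
    and p: "\<forall>i<n. p i \<le> p (Suc i)" by (rule variation_sumsE)
  have "\<forall>i<n. min (p i) x \<le> min (p (Suc i)) x" using p by (auto simp: min_def)
  from variation_sumsI[OF this, of a] show "s \<in> variation_sums a" by (simp add: s)
qed

lemma bounded_variation_clamp: "bounded_variation a \<Longrightarrow> bounded_variation (\<lambda>t. a (min t x))"
  unfolding bounded_variation_def by (erule bdd_above_mono[OF _ variation_sums_clamp_subset])

lemma Var_upto_le_Var: "bounded_variation a \<Longrightarrow> Var_upto a x \<le> Var a"
  unfolding Var_upto_def using variation_sums_clamp_subset variation_sum_le_Var
  by (blast intro: Var_le)

lemma Var_upto_nonneg: "bounded_variation a \<Longrightarrow> 0 \<le> Var_upto a x"
  unfolding Var_upto_def by (intro Var_nonneg bounded_variation_clamp)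

lemma Var_upto_add_abs_diff_le:
  assumes bv: "bounded_variation a" and "x \<le> y"
  shows "Var_upto a x + \<bar>a y - a x\<bar> \<le> Var_upto a y"
proof -
  have "s \<le> Var_upto a y - \<bar>a y - a x\<bar>" if s_in: "s \<in> variation_sums (\<lambda>t. a (min t x))" for s
  proof -
    obtain p n where s: "s = (\<Sum>i<n. \<bar>a (min (p (Suc i)) x) - a (min (p i) x)\<bar>)"
      and p: "\<forall>i<n. p i \<le> p (Suc i)" using s_in by (rule variation_sumsE)
    define q where "q i = (if i \<le> n then min (p i) x else if i = Suc n then x else y)" for i
    have q_mono: "\<forall>i<Suc (Suc n). q i \<le> q (Suc i)"
      using p \<open>x \<le> y\<close> by (auto simp: q_def min.coboundedI1 min_le_iff_disj)
    have q_le: "i \<le> Suc n \<Longrightarrow> q i \<le> y" for i using \<open>x \<le> y\<close> by (auto simp: q_def)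
    have "(\<Sum>i<n. \<bar>a (min (q (Suc i)) y) - a (min (q i) y)\<bar>) = s"
      unfolding s
    proof (rule sum.cong)
      fix i assume "i \<in> {..<n}"
      then show "\<bar>a (min (q (Suc i)) y) - a (min (q i) y)\<bar> = \<bar>a (min (p (Suc i)) x) - a (min (p i) x)\<bar>"
        using q_le[of i] q_le[of "Suc i"] by (auto simp: q_def min_absorb1)
    qed simp
    moreover have "q (Suc n) = x" "q (Suc (Suc n)) = y" by (auto simp: q_def)
    moreover have "(\<Sum>i<Suc (Suc n). \<bar>a (min (q (Suc i)) y) - a (min (q i) y)\<bar>) \<le> Var_upto a y"
      unfolding Var_upto_def
      by (rule variation_sum_le_Var[OF bounded_variation_clamp[OF bv] variation_sumsI[OF q_mono]])
    ultimately show ?thesis using \<open>x \<le> y\<close> by (simp add: min_absorb1)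
  qed
  then have "Var_upto a x \<le> Var_upto a y - \<bar>a y - a x\<bar>"
    unfolding Var_upto_def[of a x] by (rule Var_le)
  then show ?thesis by simp
qed

lemma bounded_variation_jordan_decomposition:
  fixes a :: "real \<Rightarrow> real"
  assumes bv: "bounded_variation a" and supp: "\<And>x. \<bar>x\<bar> > K \<Longrightarrow> a x = 0"
  obtains P N where "mono P" "mono N" "\<And>x. 0 \<le> P x" "\<And>x. P x \<le> Var a / 2"
    "\<And>x. 0 \<le> N x" "\<And>x. N x \<le> Var a / 2" "a = (\<lambda>x. P x - N x)"
proof
  let ?V = "Var_upto a"
  have incr: "x \<le> y \<Longrightarrow> ?V x + \<bar>a y - a x\<bar> \<le> ?V y" for x y
    by (rule Var_upto_add_abs_diff_le[OF bv])
  have lower: "\<bar>a x\<bar> \<le> ?V x" for x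
    using incr[of "min x (- \<bar>K\<bar> - 1)" x] Var_upto_nonneg[OF bv, of "min x (- \<bar>K\<bar> - 1)"]
      supp[of "min x (- \<bar>K\<bar> - 1)"] by simp
  have upper: "?V x + \<bar>a x\<bar> \<le> Var a" for x
    using incr[of x "max x (\<bar>K\<bar> + 1)"] Var_upto_le_Var[OF bv, of "max x (\<bar>K\<bar> + 1)"]
      supp[of "max x (\<bar>K\<bar> + 1)"] by simp
  show "mono (\<lambda>x. (?V x + a x) / 2)" "mono (\<lambda>x. (?V x - a x) / 2)"
    using incr by (force simp: mono_def intro: order.trans[OF _ incr])+
  show "0 \<le> (?V x + a x) / 2" "(?V x + a x) / 2 \<le> Var a / 2"
    "0 \<le> (?V x - a x) / 2" "(?V x - a x) / 2 \<le> Var a / 2" for x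
    using lower[of x] upper[of x] by auto
  show "a = (\<lambda>x. (?V x + a x) / 2 - (?V x - a x) / 2)" by (simp add: fun_eq_iff field_simps)
qed

lemma borel_measurable_bounded_variation:
  fixes a :: "real \<Rightarrow> real"
  assumes "bounded_variation a" and "\<And>x. \<bar>x\<bar> > K \<Longrightarrow> a x = 0"
  shows "a \<in> borel_measurable borel"
proof -
  obtain P N where "mono P" "mono N" and a: "a = (\<lambda>x. P x - N x)"
    using bounded_variation_jordan_decomposition[OF assms] by blast
  then have "P \<in> borel_measurable borel" "N \<in> borel_measurable borel"
    by (auto intro: borel_measurable_mono)
  then show ?thesis unfolding a by simp
qed

definition primitive :: "(real \<Rightarrow> real) \<Rightarrow> real \<Rightarrow> real" where
  "primitive b u = (\<integral>y. indicator {..u} y * b y \<partial>lborel)"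

lemma borel_measurable_conv:
  fixes a b :: "real \<Rightarrow> real"
  assumes [measurable]: "a \<in> borel_measurable borel" "b \<in> borel_measurable borel"
  shows "conv a b \<in> borel_measurable borel"
proof -
  have [measurable]: "(\<lambda>(x, y). a (x - y) * b y) \<in> borel_measurable (borel \<Otimes>\<^sub>M lborel)"
    unfolding case_prod_beta by measurable
  show ?thesis unfolding conv_def[abs_def] by measurable
qed

lemma borel_measurable_primitive:
  fixes b :: "real \<Rightarrow> real"
  assumes [measurable]: "b \<in> borel_measurable borel"
  shows "primitive b \<in> borel_measurable borel"
proof -
  have [measurable]: "(\<lambda>(u, y). indicator {..u} y * b y) \<in> borel_measurable (borel \<Otimes>\<^sub>M lborel)"
    unfolding case_prod_beta indicator_def atMost_iff by measurable
  show ?thesis unfolding primitive_def[abs_def] by measurable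
qed

lemma integrable_conv_bounded:
  fixes Q b :: "real \<Rightarrow> real"
  assumes [measurable]: "Q \<in> borel_measurable borel" and Q_bound: "\<And>z. \<bar>Q z\<bar> \<le> M"
    and b: "integrable lborel b"
  shows "integrable lborel (\<lambda>y. Q (x - y) * b y)"
proof (rule Bochner_Integration.integrable_bound[where f="\<lambda>y. M * b y"])
  show "integrable lborel (\<lambda>y. M * b y)" using b by simp
  show "(\<lambda>y. Q (x - y) * b y) \<in> borel_measurable lborel"
    using borel_measurable_integrable[OF b] by measurable
  have "\<bar>Q (x - y)\<bar> * \<bar>b y\<bar> \<le> \<bar>M\<bar> * \<bar>b y\<bar>" for y
    using Q_bound[of "x - y"] by (intro mult_right_mono) auto
  then show "AE y in lborel. norm (Q (x - y) * b y) \<le> norm (M * b y)"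
    by (simp add: abs_mult)
qed

lemma upward_closed_real_cases:
  fixes U :: "real set"
  assumes up: "\<And>z w. z \<in> U \<Longrightarrow> z \<le> w \<Longrightarrow> w \<in> U"
  obtains t where "{t<..} \<subseteq> U" "U \<subseteq> {t..}" | "U = {}" | "U = UNIV"
proof -
  assume half_line: "\<And>t. {t<..} \<subseteq> U \<Longrightarrow> U \<subseteq> {t..} \<Longrightarrow> thesis"
    and empty: "U = {} \<Longrightarrow> thesis" and univ: "U = UNIV \<Longrightarrow> thesis"
  show thesis
  proof (cases "U = {} \<or> U = UNIV")
    case False
    then obtain w where "w \<notin> U" and "U \<noteq> {}" by blast
    then have bdd: "bdd_below U" using up by (meson bdd_below.I linear)
    show thesis
    proof (rule half_line[of "Inf U"])
      show "{Inf U<..} \<subseteq> U"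
        using up cInf_less_iff[OF \<open>U \<noteq> {}\<close> bdd] by (fastforce simp: less_imp_le)
      show "U \<subseteq> {Inf U..}" using cInf_lower[OF _ bdd] by auto
    qed
  qed (use empty univ in blast)
qed

lemma nn_integral_abs_conv_upward_closed_le:
  fixes U :: "real set" and b :: "real \<Rightarrow> real"
  assumes up: "\<And>z w. z \<in> U \<Longrightarrow> z \<le> w \<Longrightarrow> w \<in> U"
    and b: "integrable lborel b" and b_mean: "(\<integral>y. b y \<partial>lborel) = 0"
  shows "(\<integral>\<^sup>+x. ennreal \<bar>\<integral>y. indicator U (x - y) * b y \<partial>lborel\<bar> \<partial>lborel)
    \<le> (\<integral>\<^sup>+u. ennreal \<bar>primitive b u\<bar> \<partial>lborel)"
proof (rule upward_closed_real_cases[OF up])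
  fix t assume half_line: "{t<..} \<subseteq> U" "U \<subseteq> {t..}"
  have [measurable]: "b \<in> borel_measurable borel" using b by (simp add: borel_measurable_integrable)
  have "mono (\<lambda>z. indicator U z :: real)" using up by (auto simp: mono_def indicator_def)
  then have [measurable]: "(\<lambda>z. indicator U z :: real) \<in> borel_measurable borel"
    by (rule borel_measurable_mono)
  have [measurable]: "primitive b \<in> borel_measurable borel" by (rule borel_measurable_primitive) simp
  have ind: "indicator U (x - y) = (indicator {..x - t} y :: real)" if "y \<noteq> x - t" for x y
    using half_line that by (cases "y < x - t") (auto simp: indicator_def subset_iff)
  have "(\<integral>y. indicator U (x - y) * b y \<partial>lborel) = primitive b (x - t)" for x
    unfolding primitive_def
  proof (rule integral_cong_AE)
    show "AE y in lborel. indicator U (x - y) * b y = indicator {..x - t} y * b y"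
      using AE_lborel_singleton[of "x - t"] by eventually_elim (simp add: ind)
  qed measurable
  then show ?thesis
    using nn_integral_real_affine[of "\<lambda>u. ennreal \<bar>primitive b u\<bar>" 1 "- t"] by simp
qed (simp_all add: b_mean)

lemma abs_integral_le_nn_integral_abs:
  fixes f :: "'a \<Rightarrow> real"
  shows "ennreal \<bar>\<integral>x. f x \<partial>M\<bar> \<le> (\<integral>\<^sup>+x. ennreal \<bar>f x\<bar> \<partial>M)"
  using integral_norm_bound_ennreal[of M f]
  by (cases "integrable M f") (simp_all add: not_integrable_integral_eq)

lemma conv_layer_cake:
  fixes P b :: "real \<Rightarrow> real"
  assumes [measurable]: "P \<in> borel_measurable borel"
    and P_nonneg: "\<And>z. 0 \<le> P z" and P_le: "\<And>z. P z \<le> c" and b: "integrable lborel b"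
  shows "conv P b x
    = (\<integral>s. indicator {0..c} s * (\<integral>y. indicator {z. s < P z} (x - y) * b y \<partial>lborel) \<partial>lborel)"
proof -
  have [measurable]: "b \<in> borel_measurable borel" using b by (simp add: borel_measurable_integrable)
  define F where "F y s = b y * indicator {0..<P (x - y)} s" for y s
  have F_integrable: "integrable (lborel \<Otimes>\<^sub>M lborel) (case_prod F)"
  proof (rule lborel_pair.Fubini_integrable)
    show "case_prod F \<in> borel_measurable (lborel \<Otimes>\<^sub>M lborel)"
      unfolding F_def case_prod_beta indicator_def atLeastLessThan_iff by measurable
    have "(\<lambda>y. \<integral>s. norm (F y s) \<partial>lborel) = (\<lambda>y. P (x - y) * \<bar>b y\<bar>)"
      using P_nonneg by (simp add: F_def abs_mult fun_eq_iff)
    moreover have "integrable lborel (\<lambda>y. P (x - y) * \<bar>b y\<bar>)"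
      using P_nonneg P_le by (intro integrable_conv_bounded[where M=c]) (auto simp: b)
    ultimately show "integrable lborel (\<lambda>y. \<integral>s. norm (case_prod F (y, s)) \<partial>lborel)" by simp
    show "AE y in lborel. integrable lborel (\<lambda>s. case_prod F (y, s))"
      using P_nonneg by (simp add: F_def)
  qed
  have inner_y: "(\<integral>y. F y s \<partial>lborel)
      = indicator {0..c} s * (\<integral>y. indicator {z. s < P z} (x - y) * b y \<partial>lborel)" for s
  proof -
    have "F y s = indicator {0..c} s * (indicator {z. s < P z} (x - y) * b y)" for y
      using P_le[of "x - y"] by (auto simp: F_def indicator_def)
    then show ?thesis by simp
  qed
  have "conv P b x = (\<integral>y. \<integral>s. F y s \<partial>lborel \<partial>lborel)"
    using P_nonneg by (simp add: conv_def F_def mult.commute)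
  also have "\<dots> = (\<integral>s. \<integral>y. F y s \<partial>lborel \<partial>lborel)"
    using lborel_pair.Fubini_integral[OF F_integrable] by simp
  finally show ?thesis by (simp only: inner_y)
qed

lemma nn_integral_abs_conv_mono_le:
  fixes P b :: "real \<Rightarrow> real"
  assumes "mono P" and P_nonneg: "\<And>z. 0 \<le> P z" and P_le: "\<And>z. P z \<le> c"
    and b: "integrable lborel b" and b_mean: "(\<integral>y. b y \<partial>lborel) = 0"
  shows "(\<integral>\<^sup>+x. ennreal \<bar>conv P b x\<bar> \<partial>lborel)
    \<le> ennreal c * (\<integral>\<^sup>+u. ennreal \<bar>primitive b u\<bar> \<partial>lborel)"
proof -
  have P_meas[measurable]: "P \<in> borel_measurable borel"
    using \<open>mono P\<close> by (rule borel_measurable_mono)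
  have [measurable]: "b \<in> borel_measurable borel" using b by (simp add: borel_measurable_integrable)
  define G where "G s x = (\<integral>y. indicator {z. s < P z} (x - y) * b y \<partial>lborel)" for s x
  define B where "B = (\<integral>\<^sup>+u. ennreal \<bar>primitive b u\<bar> \<partial>lborel)"
  have [measurable]: "(\<lambda>(x, s). G s x) \<in> borel_measurable (lborel \<Otimes>\<^sub>M lborel)"
  proof -
    have [measurable]: "(\<lambda>(q, y). of_bool (snd q < P (fst q - y)) * b y)
        \<in> borel_measurable ((lborel \<Otimes>\<^sub>M lborel) \<Otimes>\<^sub>M lborel)"
      unfolding case_prod_beta by measurable
    have "(\<lambda>(x, s). G s x) = (\<lambda>q. \<integral>y. of_bool (snd q < P (fst q - y)) * b y \<partial>lborel)"
      by (auto simp: G_def fun_eq_iff indicator_def)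
    then show ?thesis by simp
  qed
  have level: "(\<integral>\<^sup>+x. ennreal \<bar>G s x\<bar> \<partial>lborel) \<le> B" for s
    unfolding G_def B_def using \<open>mono P\<close>
    by (intro nn_integral_abs_conv_upward_closed_le b b_mean) (auto intro: less_le_trans simp: mono_def)
  have "(\<integral>\<^sup>+x. ennreal \<bar>conv P b x\<bar> \<partial>lborel)
      \<le> (\<integral>\<^sup>+x. \<integral>\<^sup>+s. indicator {0..c} s * ennreal \<bar>G s x\<bar> \<partial>lborel \<partial>lborel)"
  proof (rule nn_integral_mono)
    fix x
    have "ennreal \<bar>conv P b x\<bar> \<le> (\<integral>\<^sup>+s. ennreal \<bar>indicator {0..c} s * G s x\<bar> \<partial>lborel)"
      unfolding conv_layer_cake[OF P_meas P_nonneg P_le b] G_def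
      by (rule abs_integral_le_nn_integral_abs)
    also have "\<dots> = (\<integral>\<^sup>+s. indicator {0..c} s * ennreal \<bar>G s x\<bar> \<partial>lborel)"
      by (intro nn_integral_cong) (simp add: indicator_def)
    finally show "ennreal \<bar>conv P b x\<bar> \<le> \<dots>" .
  qed
  also have "\<dots> = (\<integral>\<^sup>+s. indicator {0..c} s * (\<integral>\<^sup>+x. ennreal \<bar>G s x\<bar> \<partial>lborel) \<partial>lborel)"
    by (subst lborel_pair.Fubini') (simp_all add: nn_integral_cmult)
  also have "\<dots> \<le> (\<integral>\<^sup>+s. B * indicator {0..c} s \<partial>lborel)"
    using level by (intro nn_integral_mono) (simp add: indicator_def)
  also have "\<dots> = ennreal c * B"
    using P_nonneg[of 0] P_le[of 0] by (simp add: nn_integral_cmult_indicator mult.commute)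
  finally show ?thesis unfolding B_def .
qed

lemma nn_integral_abs_conv_le_Var:
  fixes a b :: "real \<Rightarrow> real"
  assumes bv: "bounded_variation a" and a_supp: "\<And>x. \<bar>x\<bar> > K \<Longrightarrow> a x = 0"
    and b: "integrable lborel b" and b_mean: "(\<integral>y. b y \<partial>lborel) = 0"
  shows "(\<integral>\<^sup>+x. ennreal \<bar>conv a b x\<bar> \<partial>lborel)
    \<le> ennreal (Var a) * (\<integral>\<^sup>+u. ennreal \<bar>primitive b u\<bar> \<partial>lborel)"
proof -
  obtain P N where "mono P" "mono N" and P: "\<And>x. 0 \<le> P x" "\<And>x. P x \<le> Var a / 2"
    and N: "\<And>x. 0 \<le> N x" "\<And>x. N x \<le> Var a / 2" and a: "a = (\<lambda>x. P x - N x)"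
    using bounded_variation_jordan_decomposition[OF bv a_supp] by blast
  have [measurable]: "P \<in> borel_measurable borel" "N \<in> borel_measurable borel"
    "b \<in> borel_measurable borel"
    using \<open>mono P\<close> \<open>mono N\<close> b by (auto intro: borel_measurable_mono borel_measurable_integrable)
  have "integrable lborel (\<lambda>y. P (x - y) * b y)" "integrable lborel (\<lambda>y. N (x - y) * b y)" for x
    using P N by (auto intro!: integrable_conv_bounded[where M="Var a / 2"] b)
  then have conv_diff: "conv a b x = conv P b x - conv N b x" for x
    unfolding conv_def a by (simp add: left_diff_distrib)
  define B where "B = (\<integral>\<^sup>+u. ennreal \<bar>primitive b u\<bar> \<partial>lborel)"
  have "(\<integral>\<^sup>+x. ennreal \<bar>conv a b x\<bar> \<partial>lborel)
      \<le> (\<integral>\<^sup>+x. ennreal \<bar>conv P b x\<bar> + ennreal \<bar>conv N b x\<bar> \<partial>lborel)"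
    unfolding conv_diff by (intro nn_integral_mono) (simp add: ennreal_plus[symmetric] del: ennreal_plus)
  also have "\<dots> = (\<integral>\<^sup>+x. ennreal \<bar>conv P b x\<bar> \<partial>lborel) + (\<integral>\<^sup>+x. ennreal \<bar>conv N b x\<bar> \<partial>lborel)"
    using borel_measurable_conv[of P b] borel_measurable_conv[of N b] by (intro nn_integral_add) simp_all
  also have "\<dots> \<le> ennreal (Var a / 2) * B + ennreal (Var a / 2) * B"
    unfolding B_def by (intro add_mono nn_integral_abs_conv_mono_le \<open>mono P\<close> \<open>mono N\<close> P N b b_mean)
  also have "\<dots> = ennreal (Var a) * B"
    using Var_nonneg[OF bv] by (simp add: distrib_right[symmetric] ennreal_plus[symmetric] del: ennreal_plus)
  finally show ?thesis unfolding B_def .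
qed

lemma conv_eq_0_outside:
  assumes "\<And>x. \<bar>x\<bar> > K \<Longrightarrow> a x = 0" and "\<And>x. x \<notin> {0..1} \<Longrightarrow> b x = 0"
    and "\<bar>x\<bar> > K + 1"
  shows "conv a b x = 0"
proof -
  have "a (x - y) * b y = 0" for y
  proof (cases "y \<in> {0..1}")
    case True
    then have "\<bar>x - y\<bar> > K" using assms(3) by auto
    then show ?thesis using assms(1) by simp
  qed (simp add: assms(2))
  then have "(\<lambda>y. a (x - y) * b y) = (\<lambda>y. 0)" by (rule ext)
  then show ?thesis by (simp add: conv_def)
qed

lemma normW_nonneg: "0 \<le> normW f"
  unfolding normW_def set_lebesgue_integral_def
  by (rule Bochner_Integration.integral_nonneg) (simp add: indicator_def)

lemma nn_integral_abs_primitive: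
  fixes b :: "real \<Rightarrow> real"
  assumes b: "integrable lborel b" and b_supp: "\<And>x. x \<notin> {0..1} \<Longrightarrow> b x = 0"
    and b_mean: "(\<integral>y. b y \<partial>lborel) = 0"
  shows "(\<integral>\<^sup>+u. ennreal \<bar>primitive b u\<bar> \<partial>lborel) = ennreal (normW b)"
proof -
  have [measurable]: "b \<in> borel_measurable borel" using b by (simp add: borel_measurable_integrable)
  have [measurable]: "primitive b \<in> borel_measurable borel" by (rule borel_measurable_primitive) simp
  have primitive_eq: "\<bar>primitive b u\<bar> = indicator {0..1} u * \<bar>\<integral>t\<in>{0..u}. b t \<partial>lborel\<bar>" for u
  proof -
    consider "u < 0" | "u \<in> {0..1}" | "1 < u" by fastforce
    then show ?thesis
    proof cases
      case 1
      then have "(\<lambda>y. indicator {..u} y * b y) = (\<lambda>y. 0)"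
        using b_supp by (auto simp: fun_eq_iff indicator_def)
      then show ?thesis using 1 by (simp add: primitive_def)
    next
      case 2
      then have "(\<lambda>y. indicator {..u} y * b y) = (\<lambda>y. indicator {0..u} y * b y)"
        using b_supp by (auto simp: fun_eq_iff indicator_def)
      then show ?thesis using 2 by (simp add: primitive_def set_lebesgue_integral_def)
    next
      case 3
      then have "(\<lambda>y. indicator {..u} y * b y) = b"
        using b_supp by (auto simp: fun_eq_iff indicator_def)
      then show ?thesis using 3 b_mean by (simp add: primitive_def)
    qed
  qed
  have "integrable lborel (\<lambda>u. \<bar>primitive b u\<bar>)"
  proof (rule Bochner_Integration.integrable_bound)
    show "integrable lborel (\<lambda>u::real. (\<integral>y. \<bar>b y\<bar> \<partial>lborel) * indicator {0..1} u :: real)"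
      by (intro integrable_mult_right integrable_real_indicator) auto
    have abs_primitive_le: "\<bar>primitive b u\<bar> \<le> (\<integral>y. \<bar>b y\<bar> \<partial>lborel)" for u
      unfolding primitive_def using b integrable_mult_indicator[of "{..u}" lborel b]
      by (intro integral_abs_bound_integral) (auto simp: indicator_def)
    have "\<bar>primitive b u\<bar> \<le> (\<integral>y. \<bar>b y\<bar> \<partial>lborel) * indicator {0..1} u" for u
      using abs_primitive_le[of u] primitive_eq[of u] by (cases "u \<in> {0..1}") auto
    then show "AE u in lborel. norm \<bar>primitive b u\<bar> \<le> norm ((\<integral>y. \<bar>b y\<bar> \<partial>lborel) * indicator {0..1} u)"
      by (intro AE_I2) (auto intro: order_trans[OF _ abs_ge_self])
  qed simp
  then have "(\<integral>\<^sup>+u. ennreal \<bar>primitive b u\<bar> \<partial>lborel) = ennreal (\<integral>u. \<bar>primitive b u\<bar> \<partial>lborel)"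
    by (rule nn_integral_eq_integral) simp
  also have "(\<integral>u. \<bar>primitive b u\<bar> \<partial>lborel) = normW b"
    by (simp add: primitive_eq normW_def set_lebesgue_integral_def)
  finally show ?thesis .
qed

lemma pushforward_pi_eq_sum:
  fixes h :: "real \<Rightarrow> real" and n :: int
  assumes h_supp: "\<And>x. \<bar>x\<bar> > 2 * of_int n \<Longrightarrow> h x = 0" and "y \<in> {0..1}"
  shows "pushforward_pi h y = (\<Sum>i\<in>{-n..n}. h (2 * of_int i + y) + h (2 * of_int i - y))"
proof -
  have "h (2 * of_int i + y) = 0 \<and> h (2 * of_int i - y) = 0" if "i \<notin> {-n..n}" for i
  proof -
    have "real_of_int n + 1 \<le> real_of_int i \<or> real_of_int i \<le> - real_of_int n - 1"
      using that by (auto simp flip: of_int_le_iff)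
    then show ?thesis using \<open>y \<in> {0..1}\<close> by (auto intro!: h_supp)
  qed
  then have "pushforward_pi h y = (\<Sum>\<^sub>\<infinity>i\<in>{-n..n}. h (2 * of_int i + y) + h (2 * of_int i - y))"
    unfolding pushforward_pi_def by (intro infsum_cong_neutral) auto
  then show ?thesis by simp
qed

lemma disjoint_family_on_odd_intervals:
  "disjoint_family_on (\<lambda>i::int. {2 * of_int i - 1 <..< 2 * of_int i + 1 :: real}) I"
proof -
  have "i = j" if "x \<in> {2 * of_int i - 1 <..< 2 * of_int i + 1}"
    "x \<in> {2 * of_int j - 1 <..< 2 * of_int j + 1}" for i j :: int and x :: real
  proof -
    have "real_of_int i < real_of_int (j + 1)" "real_of_int j < real_of_int (i + 1)"
      using that by simp_all
    then have "i < j + 1" "j < i + 1" by (simp_all only: of_int_less_iff)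
    then show "i = j" by simp
  qed
  then show ?thesis unfolding disjoint_family_on_def by blast
qed

lemma nn_integral_reflected_translates:
  fixes h :: "real \<Rightarrow> real" and t :: real
  assumes [measurable]: "h \<in> borel_measurable borel"
  shows "(\<integral>\<^sup>+y. indicator {0<..<1} y * ennreal (\<bar>h (t + y)\<bar> + \<bar>h (t - y)\<bar>) \<partial>lborel)
    \<le> (\<integral>\<^sup>+x. indicator {t - 1<..<t + 1} x * ennreal \<bar>h x\<bar> \<partial>lborel)"
proof -
  have right: "(\<integral>\<^sup>+y. indicator {0<..<1} y * ennreal \<bar>h (t + y)\<bar> \<partial>lborel)
      = (\<integral>\<^sup>+x. indicator {t<..<t + 1} x * ennreal \<bar>h x\<bar> \<partial>lborel)"
    using nn_integral_real_affine[of "\<lambda>x. indicator {t<..<t + 1} x * ennreal \<bar>h x\<bar>" 1 t]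
    by (simp add: indicator_def)
  have left: "(\<integral>\<^sup>+y. indicator {0<..<1} y * ennreal \<bar>h (t - y)\<bar> \<partial>lborel)
      = (\<integral>\<^sup>+x. indicator {t - 1<..<t} x * ennreal \<bar>h x\<bar> \<partial>lborel)"
    using nn_integral_real_affine[of "\<lambda>x. indicator {t - 1<..<t} x * ennreal \<bar>h x\<bar>" "-1" t]
    by (simp add: indicator_def conj_commute)
  have "(\<integral>\<^sup>+y. indicator {0<..<1} y * ennreal (\<bar>h (t + y)\<bar> + \<bar>h (t - y)\<bar>) \<partial>lborel)
      = (\<integral>\<^sup>+x. indicator {t<..<t + 1} x * ennreal \<bar>h x\<bar> + indicator {t - 1<..<t} x * ennreal \<bar>h x\<bar> \<partial>lborel)"
    by (simp add: distrib_left nn_integral_add right left)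
  also have "\<dots> \<le> (\<integral>\<^sup>+x. indicator {t - 1<..<t + 1} x * ennreal \<bar>h x\<bar> \<partial>lborel)"
    by (intro nn_integral_mono) (auto simp: indicator_def)
  finally show ?thesis .
qed

text \<open>The preimage \<open>\<pi>\<^sup>-\<^sup>1(0,1)\<close> is the disjoint union of the intervals \<open>(2i - 1, 2i + 1) - {2i}\<close>,
  so folding does not increase the \<open>L\<^sup>1\<close> norm.\<close>
lemma nn_integral_pushforward_pi_le:
  fixes h :: "real \<Rightarrow> real" and n :: int
  assumes [measurable]: "h \<in> borel_measurable borel"
    and h_supp: "\<And>x. \<bar>x\<bar> > 2 * of_int n \<Longrightarrow> h x = 0"
  shows "(\<integral>\<^sup>+y. indicator {0..1} y * ennreal \<bar>pushforward_pi h y\<bar> \<partial>lborel)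
    \<le> (\<integral>\<^sup>+x. ennreal \<bar>h x\<bar> \<partial>lborel)"
proof -
  let ?A = "\<lambda>i::int. {2 * of_int i - 1 <..< 2 * of_int i + 1 :: real}"
  let ?I = "{-n..n}"
  have "(\<integral>\<^sup>+y. indicator {0..1} y * ennreal \<bar>pushforward_pi h y\<bar> \<partial>lborel)
      \<le> (\<integral>\<^sup>+y. (\<Sum>i\<in>?I. indicator {0<..<1} y
          * ennreal (\<bar>h (2 * of_int i + y)\<bar> + \<bar>h (2 * of_int i - y)\<bar>)) \<partial>lborel)"
  proof (rule nn_integral_mono_AE)
    have pointwise: "\<bar>pushforward_pi h y\<bar> \<le> (\<Sum>i\<in>?I. \<bar>h (2 * of_int i + y)\<bar> + \<bar>h (2 * of_int i - y)\<bar>)"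
      if "y \<in> {0..1}" for y
    proof -
      have "\<bar>pushforward_pi h y\<bar> \<le> (\<Sum>i\<in>?I. \<bar>h (2 * of_int i + y) + h (2 * of_int i - y)\<bar>)"
        using pushforward_pi_eq_sum[OF h_supp that] by (simp only: sum_abs)
      also have "\<dots> \<le> (\<Sum>i\<in>?I. \<bar>h (2 * of_int i + y)\<bar> + \<bar>h (2 * of_int i - y)\<bar>)"
        by (intro sum_mono abs_triangle_ineq)
      finally show ?thesis .
    qed
    show "AE y in lborel. indicator {0..1} y * ennreal \<bar>pushforward_pi h y\<bar>
        \<le> (\<Sum>i\<in>?I. indicator {0<..<1} y
          * ennreal (\<bar>h (2 * of_int i + y)\<bar> + \<bar>h (2 * of_int i - y)\<bar>))"
      using AE_lborel_singleton[of 0] AE_lborel_singleton[of 1]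
      by eventually_elim
        (use pointwise in \<open>auto simp: indicator_def simp del: ennreal_plus intro!: ennreal_leI\<close>)
  qed
  also have "\<dots> = (\<Sum>i\<in>?I. \<integral>\<^sup>+y. indicator {0<..<1} y
      * ennreal (\<bar>h (2 * of_int i + y)\<bar> + \<bar>h (2 * of_int i - y)\<bar>) \<partial>lborel)"
    by (rule nn_integral_sum) simp
  also have "\<dots> \<le> (\<Sum>i\<in>?I. \<integral>\<^sup>+x. indicator (?A i) x * ennreal \<bar>h x\<bar> \<partial>lborel)"
    by (intro sum_mono nn_integral_reflected_translates) simp
  also have "\<dots> = (\<integral>\<^sup>+x. indicator (\<Union>i\<in>?I. ?A i) x * ennreal \<bar>h x\<bar> \<partial>lborel)"
    by (simp add: nn_integral_sum[symmetric] sum_distrib_right[symmetric]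
        indicator_UN_disjoint[OF _ disjoint_family_on_odd_intervals])
  also have "\<dots> \<le> (\<integral>\<^sup>+x. ennreal \<bar>h x\<bar> \<partial>lborel)"
    by (intro nn_integral_mono) (simp add: indicator_def)
  finally show ?thesis .
qed

lemma set_integral_abs_le_of_nn_integral:
  fixes f :: "real \<Rightarrow> real"
  assumes "(\<integral>\<^sup>+x. indicator A x * ennreal \<bar>f x\<bar> \<partial>lborel) \<le> ennreal R" and "0 \<le> R"
  shows "(\<integral>x\<in>A. \<bar>f x\<bar> \<partial>lborel) \<le> R"
proof (cases "integrable lborel (\<lambda>x. indicator A x * \<bar>f x\<bar>)")
  case True
  have "(\<integral>\<^sup>+x. indicator A x * ennreal \<bar>f x\<bar> \<partial>lborel) = ennreal (\<integral>x\<in>A. \<bar>f x\<bar> \<partial>lborel)"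
    using nn_integral_eq_integral[OF True] by (simp add: set_lebesgue_integral_def indicator_mult_ennreal)
  then show ?thesis using assms by (simp add: ennreal_le_iff)
next
  case False
  then show ?thesis using assms(2) by (simp add: set_lebesgue_integral_def not_integrable_integral_eq)
qed

lemma nn_integral_abs_conv_le_Var_normW:
  fixes a b :: "real \<Rightarrow> real"
  assumes bv: "bounded_variation a" and a_supp: "\<And>x. \<bar>x\<bar> > K \<Longrightarrow> a x = 0"
    and b: "integrable lborel b" and b_supp: "\<And>x. x \<notin> {0..1} \<Longrightarrow> b x = 0"
    and b_mean: "(\<integral>x\<in>{0..1}. b x \<partial>lborel) = 0"
  shows "(\<integral>\<^sup>+x. ennreal \<bar>conv a b x\<bar> \<partial>lborel) \<le> ennreal (Var a * normW b)"
proof -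
  have "(\<lambda>x. indicator {0..1} x *\<^sub>R b x) = b" using b_supp by (auto simp: fun_eq_iff indicator_def)
  then have mean: "(\<integral>y. b y \<partial>lborel) = 0" using b_mean by (simp add: set_lebesgue_integral_def)
  have "(\<integral>\<^sup>+x. ennreal \<bar>conv a b x\<bar> \<partial>lborel)
      \<le> ennreal (Var a) * (\<integral>\<^sup>+u. ennreal \<bar>primitive b u\<bar> \<partial>lborel)"
    by (rule nn_integral_abs_conv_le_Var[where K=K, OF bv a_supp b mean])
  also have "(\<integral>\<^sup>+u. ennreal \<bar>primitive b u\<bar> \<partial>lborel) = ennreal (normW b)"
    by (rule nn_integral_abs_primitive[OF b b_supp mean])
  finally show ?thesis by (simp add: ennreal_mult Var_nonneg[OF bv] normW_nonneg)
qed

lemma set_integral_abs_pushforward_pi_conv_le: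
  fixes a b :: "real \<Rightarrow> real"
  assumes bv: "bounded_variation a" and a_supp: "\<And>x. \<bar>x\<bar> > K \<Longrightarrow> a x = 0"
    and b: "integrable lborel b" and b_supp: "\<And>x. x \<notin> {0..1} \<Longrightarrow> b x = 0"
    and b_mean: "(\<integral>x\<in>{0..1}. b x \<partial>lborel) = 0"
  shows "(\<integral>y\<in>{0..1}. \<bar>pushforward_pi (conv a b) y\<bar> \<partial>lborel) \<le> Var a * normW b"
proof (rule set_integral_abs_le_of_nn_integral)
  define n where "n = \<lceil>\<bar>K\<bar> + 1\<rceil>"
  have conv_supp: "conv a b x = 0" if "\<bar>x\<bar> > 2 * of_int n" for x
  proof (rule conv_eq_0_outside[where K=K, OF a_supp b_supp])
    have "\<bar>K\<bar> + 1 \<le> of_int n" unfolding n_def by (rule le_of_int_ceiling)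
    then show "\<bar>x\<bar> > K + 1" using that by linarith
  qed
  have "conv a b \<in> borel_measurable borel"
    using borel_measurable_bounded_variation[where K=K, OF bv a_supp] b
    by (intro borel_measurable_conv) (simp_all add: borel_measurable_integrable)
  from nn_integral_pushforward_pi_le[OF this conv_supp]
    nn_integral_abs_conv_le_Var_normW[where K=K, OF bv a_supp b b_supp b_mean]
  show "(\<integral>\<^sup>+y. indicator {0..1} y * ennreal \<bar>pushforward_pi (conv a b) y\<bar> \<partial>lborel)
      \<le> ennreal (Var a * normW b)" by (rule order_trans)
  show "0 \<le> Var a * normW b" by (simp add: Var_nonneg[OF bv] normW_nonneg)
qed

lemma set_integral_hat_ext:
  "A \<subseteq> {0..1} \<Longrightarrow> (\<integral>x\<in>A. hat_ext f x \<partial>lborel) = (\<integral>x\<in>A. f x \<partial>lborel)"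
  unfolding set_lebesgue_integral_def
  by (intro Bochner_Integration.integral_cong) (auto simp: hat_ext_def indicator_def)

lemma normW_hat_ext: "normW (hat_ext f) = normW f"
  unfolding normW_def by (intro set_lebesgue_integral_cong) (auto simp: set_integral_hat_ext)

lemma integrable_hat_ext: "set_integrable lborel {0..1} f \<Longrightarrow> integrable lborel (hat_ext f)"
proof -
  have "hat_ext f = (\<lambda>x. indicator {0..1} x *\<^sub>R f x)" by (auto simp: fun_eq_iff hat_ext_def)
  then show "set_integrable lborel {0..1} f \<Longrightarrow> integrable lborel (hat_ext f)"
    by (simp add: set_integrable_def)
qed

lemma set_integral_abs_hat_conv_le:
  fixes a f :: "real \<Rightarrow> real"
  assumes bv: "bounded_variation a" and a_supp: "\<And>x. \<bar>x\<bar> > K \<Longrightarrow> a x = 0"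
    and f: "set_integrable lborel {0..1} f" and f_mean: "(\<integral>x\<in>{0..1}. f x \<partial>lborel) = 0"
  shows "(\<integral>y\<in>{0..1}. \<bar>hat_conv a f y\<bar> \<partial>lborel) \<le> Var a * normW f"
proof -
  have "hat_ext f x = 0" if "x \<notin> {0..1}" for x
    using that by (auto simp: hat_ext_def)
  moreover have "(\<integral>x\<in>{0..1}. hat_ext f x \<partial>lborel) = 0" using f_mean by (simp add: set_integral_hat_ext)
  ultimately show ?thesis
    using set_integral_abs_pushforward_pi_conv_le[where K=K, OF bv a_supp integrable_hat_ext[OF f]]
    by (simp add: hat_conv_def normW_hat_ext)
qed

lemma rho_xi_eq_0:
  assumes "\<xi> > 0" and "\<And>x. x \<notin> {-1/2..1/2} \<Longrightarrow> \<rho> x = 0" and "\<bar>x\<bar> > \<xi> / 2"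
  shows "rho_xi \<rho> \<xi> x = 0"
proof -
  have "\<bar>x / \<xi>\<bar> > 1/2" using assms(1,3) by (simp add: abs_divide pos_less_divide_eq)
  then have "x / \<xi> \<notin> {-1/2..1/2}" by auto
  then show ?thesis by (simp add: rho_xi_def assms(2))
qed

theorem lemma77:
  fixes a b \<rho> :: "real \<Rightarrow> real" and \<xi> :: real
  assumes a_bv: "bounded_variation a"
    and a_supp: "\<And>x. x \<notin> {-1/2<..<1/2} \<Longrightarrow> a x = 0"
    and b_int: "integrable lborel b"
    and b_supp: "\<And>x. x \<notin> {0..1} \<Longrightarrow> b x = 0"
    and b_avg: "(\<integral>x\<in>{0..1}. b x \<partial>lborel) = 0"
    and rho_bv: "bounded_variation \<rho>"
    and rho_supp: "\<And>x. x \<notin> {-1/2..1/2} \<Longrightarrow> \<rho> x = 0"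
    and rho_int: "integrable lborel \<rho>"
    and rho_one: "(\<integral>x. \<rho> x \<partial>lborel) = 1"
    and xi_pos: "\<xi> > 0"
  shows "(\<integral>x\<in>{-1..2}. \<bar>conv a b x\<bar> \<partial>lborel) \<le> Var a * normW b
    \<and> (\<integral>y\<in>{0..1}. \<bar>hat_conv a b y\<bar> \<partial>lborel) \<le> Var a * normW b
    \<and> (\<forall>f. set_integrable lborel {0..1} f \<and> (\<integral>x\<in>{0..1}. f x \<partial>lborel) = 0 \<longrightarrow>
          (\<integral>y\<in>{0..1}. \<bar>N_op \<rho> \<xi> f y\<bar> \<partial>lborel) \<le> Var (rho_xi \<rho> \<xi>) * normW f)
    \<and> Var (rho_xi \<rho> \<xi>) = Var \<rho> / \<xi>"
proof (intro conjI allI impI)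
  have a_supp': "\<bar>x\<bar> > 1/2 \<Longrightarrow> a x = 0" for x by (rule a_supp) auto
  have "(\<integral>\<^sup>+x. indicator {-1..2} x * ennreal \<bar>conv a b x\<bar> \<partial>lborel)
      \<le> (\<integral>\<^sup>+x. ennreal \<bar>conv a b x\<bar> \<partial>lborel)"
    by (intro nn_integral_mono) (simp add: indicator_def)
  also have "\<dots> \<le> ennreal (Var a * normW b)"
    by (rule nn_integral_abs_conv_le_Var_normW[OF a_bv a_supp' b_int b_supp b_avg])
  finally show "(\<integral>x\<in>{-1..2}. \<bar>conv a b x\<bar> \<partial>lborel) \<le> Var a * normW b"
    by (rule set_integral_abs_le_of_nn_integral) (simp add: Var_nonneg[OF a_bv] normW_nonneg)
  have b_set_int: "set_integrable lborel {0..1} b"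
    using b_int unfolding set_integrable_def by (intro integrable_mult_indicator) simp_all
  show "(\<integral>y\<in>{0..1}. \<bar>hat_conv a b y\<bar> \<partial>lborel) \<le> Var a * normW b"
    using set_integral_abs_hat_conv_le[OF a_bv a_supp' b_set_int b_avg] .
  show "Var (rho_xi \<rho> \<xi>) = Var \<rho> / \<xi>" by (rule Var_rho_xi[OF xi_pos rho_bv])
  fix f :: "real \<Rightarrow> real"
  assume "set_integrable lborel {0..1} f \<and> (\<integral>x\<in>{0..1}. f x \<partial>lborel) = 0"
  then show "(\<integral>y\<in>{0..1}. \<bar>N_op \<rho> \<xi> f y\<bar> \<partial>lborel) \<le> Var (rho_xi \<rho> \<xi>) * normW f"
    unfolding N_op_def using rho_xi_eq_0[OF xi_pos rho_supp]
    by (intro set_integral_abs_hat_conv_le[where K="\<xi> / 2" and a="rho_xi \<rho> \<xi>"]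
        bounded_variation_rho_xi[OF xi_pos rho_bv]) auto
qed

end
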